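(* Let $f:\mathbb{R}\to(0,\infty)$ be a nonvanishing symmetric, standardized probability density ($f(-z)=f(z)$ for all $z$) and let $\Pi:\mathbb{R}\times\mathbb{R}\to[0,1]$ be a skewing function. Consider the skew-symmetric family with densities $$f^\Pi_{\mu,\sigma,\delta}(x)=2\sigma^{-1}f\bigl(\sigma^{-1}(x-\mu)\bigr)\,\Pi\bigl(\sigma^{-1}(x-\mu),\delta\bigr),\qquad \mu\in\mathbb{R},\ \sigma>0,\ \delta\in\mathbb{R}.$$ Assume Assumption (A2$^+$) (stated in the context) holds. Then the couple $(f,\Pi)$ leads to a skew-symmetric family subject to the double singularity phenomenon (defined in the context) if and only if $f$ is the standard normal density $\phi(z)=(2\pi)^{-1/2}e^{-z^2/2}$ and the skewing function satisfies $\psi(z):=\partial_\delta\Pi(z,\delta)\vert_{\delta=0}=cz$ for all $z$, for some real constant $c$. (The family is then a particular generalized skew-normal family, i.e. one of the form above with $f=\phi$.)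
   Context: A skewing function is a map $\Pi:\mathbb{R}\times\mathbb{R}\to[0,1]$ with $\Pi(-z,\delta)+\Pi(z,\delta)=1$ for all $z,\delta$, $\Pi(z,0)=1/2$ for all $z$, and, whenever the relevant derivatives of order $s$ at $\delta=0$ exist, $\partial_z^s\Pi(z,\delta)\vert_{\delta=0}=0$ for all $z$ and, for $s$ even, $\partial_\delta^s\Pi(z,\delta)\vert_{\delta=0}=0$ for all $z$. "Standardized" means the scale of $f$ is fixed to one (an identification constraint for $\sigma$). Write $\varphi_f=-\dot f/f$. Assumption (A2): (i) $(z,\delta)\mapsto\Pi(z,\delta)$ is continuously differentiable at $\delta=0$ for all $z$; (ii) $\psi(z):=\partial_\delta\Pi(z,\delta)\vert_{\delta=0}$ admits a primitive $\Psi$; (iii) $\int\psi^2(z)f(z)\,dz<\infty$. Let $\mathcal{A}=\{a\in\mathbb{R}:\int_{-\infty}^\infty e^{-a\Psi(z)}dz<\infty\}$ and $\mathcal{E}_\Psi=\{g_a=e^{-a\Psi}/\int e^{-a\Psi(z)}dz : a\in\mathcal{A}\}$. The family is subject to (simple) Fisher singularity at $\delta=0$ when its Fisher information matrix in $(\mu,\sigma,\delta)$ at $\delta=0$ is singular; this happens iff $f=g_a\in\mathcal{E}_\Psi$ for some $a\in\mathcal{A}$ (equivalently $\varphi_f=a\psi$). Assumption (A2$^+$): (A2) holds, $f=g_a$ for some $a\in\mathcal{A}$, and moreover (i) $(z,\delta)\mapsto\Pi(z,\delta)$ is twice continuously differentiable at $(z,0)$ for all $z$; (ii) with $\dot\psi(z)=\partial_\delta\partial_z\Pi(z,\delta)\vert_{\delta=0}$,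 the integrals $\int\psi^2(z)z^2f(z)dz$ and $\int(2a^{-1}\dot\psi(z)-2\psi^2(z))^2f(z)dz$ are finite. Double singularity: with $f=g_a$, reparametrize as $\mu^{(1)}=\mu+2\delta\sigma/a$, $\sigma^{(1)}=\sigma$, $\delta^{(1)}=\mathrm{sign}(\delta)\delta^2$. At $\delta^{(1)}=0$ the scores (with $z=\sigma^{-1}(x-\mu)$) are $\sigma^{-1}a\psi(z)$ for $\mu^{(1)}$, $\sigma^{-1}(az\psi(z)-1)$ for $\sigma^{(1)}$, and $\pm2[a^{-1}\dot\psi(z)-\psi^2(z)]$ for $\delta^{(1)}$ (left/right derivatives). The family is subject to double singularity if the Fisher information matrix (covariance of these three scores) is singular, equivalently if there is a constant $b\in\mathbb{R}$ with $b(az\psi(z)-1)/\sigma=(2/a)\dot\psi(z)-2\psi^2(z)$ for Lebesgue-a.e. $z$. *)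

theory Defs
  imports "HOL-Analysis.Analysis" "HOL-Probability.Distributions"
begin

definition has_nth_deriv_at :: "(real \<Rightarrow> real) \<Rightarrow> nat \<Rightarrow> real \<Rightarrow> bool" where
  "has_nth_deriv_at g s x \<longleftrightarrow>
     (\<exists>e>0. \<forall>k. k + 1 < s \<longrightarrow> (\<forall>y\<in>ball x e. (deriv ^^ k) g differentiable (at y)))
     \<and> (\<forall>k. k < s \<longrightarrow> (deriv ^^ k) g differentiable (at x))"

text \<open>Skewing function (Pi written as curried function of z and delta).\<close>
definition skewing_function :: "(real \<Rightarrow> real \<Rightarrow> real) \<Rightarrow> bool" where
  "skewing_function P \<longleftrightarrow>
     (\<forall>z d. 0 \<le> P z d \<and> P z d \<le> 1)
   \<and> (\<forall>z d. P (-z) d + P z d = 1)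
   \<and> (\<forall>z. P z 0 = 1/2)
   \<and> (\<forall>s z. s \<ge> 1 \<longrightarrow> has_nth_deriv_at (\<lambda>w. P w 0) s z \<longrightarrow> (deriv ^^ s) (\<lambda>w. P w 0) z = 0)
   \<and> (\<forall>s z. s \<ge> 1 \<longrightarrow> even s \<longrightarrow> has_nth_deriv_at (\<lambda>d. P z d) s 0 \<longrightarrow> (deriv ^^ s) (\<lambda>d. P z d) 0 = 0)"

definition skew_psi :: "(real \<Rightarrow> real \<Rightarrow> real) \<Rightarrow> real \<Rightarrow> real" where
  "skew_psi P z = deriv (\<lambda>d. P z d) 0"

definition skew_dpsi :: "(real \<Rightarrow> real \<Rightarrow> real) \<Rightarrow> real \<Rightarrow> real" where
  "skew_dpsi P z = deriv (\<lambda>d. deriv (\<lambda>w. P w d) z) 0"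

definition C1_at :: "(real \<times> real \<Rightarrow> real) \<Rightarrow> real \<times> real \<Rightarrow> bool" where
  "C1_at F p \<longleftrightarrow> (\<exists>U D. open U \<and> p \<in> U
      \<and> (\<forall>q\<in>U. (F has_derivative blinfun_apply (D q)) (at q))
      \<and> continuous (at p) D)"

definition C2_at :: "(real \<times> real \<Rightarrow> real) \<Rightarrow> real \<times> real \<Rightarrow> bool" where
  "C2_at F p \<longleftrightarrow> (\<exists>U D D2. open U \<and> p \<in> U
      \<and> (\<forall>q\<in>U. (F has_derivative blinfun_apply (D q)) (at q))
      \<and> (\<forall>q\<in>U. (D has_derivative blinfun_apply (D2 q)) (at q))
      \<and> continuous (at p) D2)"

definition sym_std_density :: "(real \<Rightarrow> real) \<Rightarrow> bool" where
  "sym_std_density f \<longleftrightarrow>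
     f \<in> borel_measurable lborel
   \<and> (\<forall>z. f z > 0)
   \<and> (\<forall>z. f (-z) = f z)
   \<and> integrable lborel f \<and> (LINT z|lborel. f z) = 1
   \<and> integrable lborel (\<lambda>z. z\<^sup>2 * f z) \<and> (LINT z|lborel. z\<^sup>2 * f z) = 1"

definition exp_param_set :: "(real \<Rightarrow> real) \<Rightarrow> real set" where
  "exp_param_set \<Psi> = {a. integrable lborel (\<lambda>z. exp (- a * \<Psi> z))}"

definition g_exp :: "(real \<Rightarrow> real) \<Rightarrow> real \<Rightarrow> real \<Rightarrow> real" where
  "g_exp \<Psi> a z = exp (- a * \<Psi> z) / (LINT t|lborel. exp (- a * \<Psi> t))"

definition assumption_A2 :: "(real \<Rightarrow> real) \<Rightarrow> (real \<Rightarrow> real \<Rightarrow> real) \<Rightarrow> (real \<Rightarrow> real) \<Rightarrow> bool" where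
  "assumption_A2 f P \<Psi> \<longleftrightarrow>
     (\<forall>z. C1_at (\<lambda>(w, d). P w d) (z, 0))
   \<and> (\<forall>z. (\<Psi> has_real_derivative skew_psi P z) (at z))
   \<and> integrable lborel (\<lambda>z. (skew_psi P z)\<^sup>2 * f z)"

definition assumption_A2plus :: "(real \<Rightarrow> real) \<Rightarrow> (real \<Rightarrow> real \<Rightarrow> real) \<Rightarrow> (real \<Rightarrow> real) \<Rightarrow> real \<Rightarrow> bool" where
  "assumption_A2plus f P \<Psi> a \<longleftrightarrow>
     assumption_A2 f P \<Psi>
   \<and> a \<in> exp_param_set \<Psi> \<and> f = g_exp \<Psi> a
   \<and> (\<forall>z. C2_at (\<lambda>(w, d). P w d) (z, 0))
   \<and> integrable lborel (\<lambda>z. (skew_psi P z)\<^sup>2 * z\<^sup>2 * f z)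
   \<and> integrable lborel (\<lambda>z. (2 / a * skew_dpsi P z - 2 * (skew_psi P z)\<^sup>2)\<^sup>2 * f z)"

definition skew_sym_density :: "(real \<Rightarrow> real) \<Rightarrow> (real \<Rightarrow> real \<Rightarrow> real) \<Rightarrow> real \<Rightarrow> real \<Rightarrow> real \<Rightarrow> real \<Rightarrow> real" where
  "skew_sym_density f P \<mu> \<sigma> \<delta> x = 2 / \<sigma> * f ((x - \<mu>) / \<sigma>) * P ((x - \<mu>) / \<sigma>) \<delta>"

text \<open>Scores at delta^(1) = 0 in the reparametrization (mu^(1), sigma^(1), delta^(1)):
index 1 = mu^(1), 2 = sigma^(1), 3 = delta^(1) (right derivative; the sign does not
affect singularity).\<close>
definition double_scores :: "(real \<Rightarrow> real \<Rightarrow> real) \<Rightarrow> real \<Rightarrow> real \<Rightarrow> real \<Rightarrow> 3 \<Rightarrow> real \<Rightarrow> real" where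
  "double_scores P a \<mu> \<sigma> i x =
     (let z = (x - \<mu>) / \<sigma> in
      if i = 1 then a * skew_psi P z / \<sigma>
      else if i = 2 then (a * z * skew_psi P z - 1) / \<sigma>
      else 2 * (skew_dpsi P z / a - (skew_psi P z)\<^sup>2))"

definition double_fisher_info :: "(real \<Rightarrow> real) \<Rightarrow> (real \<Rightarrow> real \<Rightarrow> real) \<Rightarrow> real \<Rightarrow> real \<Rightarrow> real \<Rightarrow> real^3^3" where
  "double_fisher_info f P a \<mu> \<sigma> =
     (\<chi> i j. LINT x|lborel. double_scores P a \<mu> \<sigma> i x * double_scores P a \<mu> \<sigma> j x
                             * skew_sym_density f P \<mu> \<sigma> 0 x)"

definition double_singular :: "(real \<Rightarrow> real) \<Rightarrow> (real \<Rightarrow> real \<Rightarrow> real) \<Rightarrow> real \<Rightarrow> bool" where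
  "double_singular f P a \<longleftrightarrow> (\<forall>\<mu> \<sigma>. \<sigma> > 0 \<longrightarrow> det (double_fisher_info f P a \<mu> \<sigma>) = 0)"

end

theory Submission
  imports Defs
begin

text \<open>At \<open>\<delta> = 0\<close> the three scores are \<open>a \<psi>\<close>, \<open>a z \<psi> - 1\<close> and
  \<open>2 (\<psi>'/a - \<psi>\<^sup>2)\<close>. Their Gram matrix under \<open>f\<close> is singular iff a nontrivial
  combination of them vanishes \<open>f\<close>-almost everywhere, hence everywhere by continuity.
  Since \<open>\<psi>\<close> is odd and \<open>\<psi>'\<close> even, the first coefficient must vanish, which leaves
  the Riccati equation \<open>\<psi>'/a - \<psi>\<^sup>2 = \<beta> (a z \<psi> - 1)\<close>; with \<open>\<psi> 0 = 0\<close> its only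
  solution is linear. Then \<open>\<Psi>\<close> is quadratic, \<open>f \<propto> exp (- a \<Psi>)\<close> is a centred
  Gaussian, and unit variance makes it \<open>\<phi>\<close>. Conversely, for \<open>\<psi> z = c z\<close> the third
  score is a multiple of the second. That \<open>\<psi>'\<close> is the mixed partial
  \<open>\<partial>\<^sub>\<delta>\<partial>\<^sub>z \<Pi>\<close> rests on the symmetry of second derivatives under the
  \<open>C\<^sup>2\<close> hypothesis.\<close>

section \<open>Symmetry of second derivatives\<close>

lemma second_difference_mean_value:
  fixes F :: "'a::real_normed_vector \<Rightarrow> real" and D :: "'a \<Rightarrow> 'a \<Rightarrow>\<^sub>L real"
  assumes dF: "\<forall>q\<in>U. (F has_derivative blinfun_apply (D q)) (at q)"
    and seg: "\<forall>s\<in>{0..t}. p + s *\<^sub>R u + t *\<^sub>R v \<in> U \<and> p + s *\<^sub>R u \<in> U" and t: "0 < t"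
  shows "\<exists>\<xi>. 0 < \<xi> \<and> \<xi> < t \<and>
           F (p + t *\<^sub>R u + t *\<^sub>R v) - F (p + t *\<^sub>R u) - F (p + t *\<^sub>R v) + F p
             = t * (D (p + \<xi> *\<^sub>R u + t *\<^sub>R v) u - D (p + \<xi> *\<^sub>R u) u)"
proof -
  have line: "((\<lambda>s. F (q + s *\<^sub>R u)) has_real_derivative D (q + s *\<^sub>R u) u) (at s)"
    if "q + s *\<^sub>R u \<in> U" for q s
  proof -
    have "((\<lambda>s. q + s *\<^sub>R u) has_derivative (\<lambda>h. h *\<^sub>R u)) (at s)"
      by (auto intro!: derivative_eq_intros)
    from has_derivative_compose[OF this dF[rule_format, OF that]]
    show ?thesis
      by (auto intro: has_derivative_imp_has_field_derivative simp: o_def blinfun.scaleR_right)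
  qed
  define g where "g s = F (p + t *\<^sub>R v + s *\<^sub>R u) - F (p + s *\<^sub>R u)" for s
  define g' where "g' s = D (p + t *\<^sub>R v + s *\<^sub>R u) u - D (p + s *\<^sub>R u) u" for s
  have "(g has_real_derivative g' s) (at s)" if "0 \<le> s" "s \<le> t" for s
    unfolding g_def g'_def
    using seg that by (intro DERIV_diff line) (auto simp: algebra_simps)
  then obtain \<xi> where "0 < \<xi>" "\<xi> < t" "g t - g 0 = (t - 0) * g' \<xi>"
    using MVT2[of 0 t g g'] t by auto
  then show ?thesis
    unfolding g_def g'_def by (intro exI[of _ \<xi>]) (simp add: algebra_simps)
qed

lemma second_difference_estimate:
  fixes F :: "'a::real_normed_vector \<Rightarrow> real" and D :: "'a \<Rightarrow> 'a \<Rightarrow>\<^sub>L real"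
    and D2 :: "'a \<Rightarrow>\<^sub>L 'a \<Rightarrow>\<^sub>L real"
  assumes dF: "\<forall>q\<in>U. (F has_derivative blinfun_apply (D q)) (at q)"
    and seg: "\<forall>s\<in>{0..t}. p + s *\<^sub>R u + t *\<^sub>R v \<in> U \<and> p + s *\<^sub>R u \<in> U" and t: "0 < t"
    and u: "norm u \<le> 1" and v: "norm v \<le> 1" and e: "0 \<le> e"
    and remainder: "\<And>h. norm h \<le> 2 * t \<Longrightarrow> norm (D (p + h) - D p - D2 h) \<le> e * norm h"
  shows "\<bar>F (p + t *\<^sub>R u + t *\<^sub>R v) - F (p + t *\<^sub>R u) - F (p + t *\<^sub>R v) + F p - t\<^sup>2 * D2 v u\<bar>
           \<le> 3 * e * t\<^sup>2"
proof -
  obtain \<xi> where \<xi>: "0 < \<xi>" "\<xi> < t"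
    and mv: "F (p + t *\<^sub>R u + t *\<^sub>R v) - F (p + t *\<^sub>R u) - F (p + t *\<^sub>R v) + F p
               = t * (D (p + \<xi> *\<^sub>R u + t *\<^sub>R v) u - D (p + \<xi> *\<^sub>R u) u)"
    using second_difference_mean_value[OF dF seg t] by blast
  have rem_u: "\<bar>(D (p + h) - D p - D2 h) u\<bar> \<le> e * r" if "norm h \<le> r" "r \<le> 2 * t" for h r
  proof -
    have "\<bar>(D (p + h) - D p - D2 h) u\<bar> \<le> norm (D (p + h) - D p - D2 h) * norm u"
      using norm_blinfun by (metis real_norm_def)
    also have "\<dots> \<le> e * norm h * 1"
      using remainder[of h] that u e by (intro mult_mono) auto
    also have "\<dots> \<le> e * r" using that e by (simp add: mult_left_mono)
    finally show ?thesis .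
  qed
  have "norm (\<xi> *\<^sub>R u + t *\<^sub>R v) \<le> \<xi> + t"
    using norm_triangle_ineq[of "\<xi> *\<^sub>R u" "t *\<^sub>R v"] u v \<xi> t by (smt (verit) mult_left_le norm_scaleR)
  then have "\<bar>(D (p + (\<xi> *\<^sub>R u + t *\<^sub>R v)) - D p - D2 (\<xi> *\<^sub>R u + t *\<^sub>R v)) u\<bar> \<le> e * (2 * t)"
    using \<xi> by (intro rem_u) auto
  moreover have "norm (\<xi> *\<^sub>R u) \<le> t"
    using u \<xi> by (smt (verit) mult_left_le norm_scaleR)
  then have "\<bar>(D (p + \<xi> *\<^sub>R u) - D p - D2 (\<xi> *\<^sub>R u)) u\<bar> \<le> e * t"
    using t by (intro rem_u) auto
  moreover have "D (p + \<xi> *\<^sub>R u + t *\<^sub>R v) u - D (p + \<xi> *\<^sub>R u) u - t * D2 v u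
      = (D (p + (\<xi> *\<^sub>R u + t *\<^sub>R v)) - D p - D2 (\<xi> *\<^sub>R u + t *\<^sub>R v)) u
        - (D (p + \<xi> *\<^sub>R u) - D p - D2 (\<xi> *\<^sub>R u)) u"
    by (simp add: blinfun.bilinear_simps algebra_simps)
  ultimately have "\<bar>D (p + \<xi> *\<^sub>R u + t *\<^sub>R v) u - D (p + \<xi> *\<^sub>R u) u - t * D2 v u\<bar> \<le> 3 * e * t"
    by linarith
  then have "t * \<bar>D (p + \<xi> *\<^sub>R u + t *\<^sub>R v) u - D (p + \<xi> *\<^sub>R u) u - t * D2 v u\<bar> \<le> t * (3 * e * t)"
    using t by (intro mult_left_mono) auto
  moreover have "F (p + t *\<^sub>R u + t *\<^sub>R v) - F (p + t *\<^sub>R u) - F (p + t *\<^sub>R v) + F p - t\<^sup>2 * D2 v u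
      = t * (D (p + \<xi> *\<^sub>R u + t *\<^sub>R v) u - D (p + \<xi> *\<^sub>R u) u - t * D2 v u)"
    unfolding mv by (simp add: power2_eq_square right_diff_distrib)
  ultimately show ?thesis using t by (simp add: abs_mult power2_eq_square mult_ac)
qed

lemma second_difference_approx:
  fixes F :: "'a::real_normed_vector \<Rightarrow> real" and D :: "'a \<Rightarrow> 'a \<Rightarrow>\<^sub>L real"
    and D2 :: "'a \<Rightarrow>\<^sub>L 'a \<Rightarrow>\<^sub>L real"
  assumes U: "open U" "p \<in> U" and dF: "\<forall>q\<in>U. (F has_derivative blinfun_apply (D q)) (at q)"
    and dD: "(D has_derivative blinfun_apply D2) (at p)"
    and u: "norm u \<le> 1" and v: "norm v \<le> 1" and e: "e > 0"
  shows "\<exists>T>0. \<forall>t. 0 < t \<and> t < T \<longrightarrow>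
           \<bar>F (p + t *\<^sub>R u + t *\<^sub>R v) - F (p + t *\<^sub>R u) - F (p + t *\<^sub>R v) + F p - t\<^sup>2 * D2 v u\<bar>
             \<le> 3 * e * t\<^sup>2"
proof -
  obtain d1 where d1: "d1 > 0" "ball p d1 \<subseteq> U" using U open_contains_ball by blast
  obtain d2 where d2: "d2 > 0"
    "\<forall>y. norm (y - p) < d2 \<longrightarrow> norm (D y - D p - D2 (y - p)) \<le> e * norm (y - p)"
    using dD e unfolding has_derivative_at_alt by blast
  show ?thesis
  proof (intro exI[of _ "min d1 d2 / 2"] conjI allI impI)
    show "min d1 d2 / 2 > 0" using d1 d2 by simp
    fix t assume t: "0 < t \<and> t < min d1 d2 / 2"
    have "p + s *\<^sub>R u + t *\<^sub>R v \<in> U \<and> p + s *\<^sub>R u \<in> U" if s: "s \<in> {0..t}" for s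
    proof -
      have "p + h \<in> U" if "norm h < d1" for h
        using d1(2) that by (auto simp: dist_norm)
      moreover have "norm (s *\<^sub>R u + t *\<^sub>R v) \<le> s + t" "norm (s *\<^sub>R u) \<le> s"
        using norm_triangle_ineq[of "s *\<^sub>R u" "t *\<^sub>R v"] u v s t
        by (smt (verit) atLeastAtMost_iff mult_left_le norm_scaleR)+
      ultimately show ?thesis using s t by (simp add: add.assoc)
    qed
    moreover have "norm (D (p + h) - D p - D2 h) \<le> e * norm h" if "norm h \<le> 2 * t" for h
      using d2(2)[rule_format, of "p + h"] that t by auto
    ultimately show "\<bar>F (p + t *\<^sub>R u + t *\<^sub>R v) - F (p + t *\<^sub>R u) - F (p + t *\<^sub>R v) + F p - t\<^sup>2 * D2 v u\<bar>
        \<le> 3 * e * t\<^sup>2"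
      using t u v e by (intro second_difference_estimate[OF dF]) auto
  qed
qed

lemma second_derivative_symmetric_norm_le_1:
  fixes F :: "'a::real_normed_vector \<Rightarrow> real" and D :: "'a \<Rightarrow> 'a \<Rightarrow>\<^sub>L real"
    and D2 :: "'a \<Rightarrow>\<^sub>L 'a \<Rightarrow>\<^sub>L real"
  assumes U: "open U" "p \<in> U" and dF: "\<forall>q\<in>U. (F has_derivative blinfun_apply (D q)) (at q)"
    and dD: "(D has_derivative blinfun_apply D2) (at p)"
    and u: "norm u \<le> 1" and v: "norm v \<le> 1"
  shows "D2 v u = D2 u v"
proof -
  have "\<bar>D2 v u - D2 u v\<bar> \<le> 0 + e" if e: "e > 0" for e
  proof -
    obtain T1 where T1: "T1 > 0" "\<forall>t. 0 < t \<and> t < T1 \<longrightarrow>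
        \<bar>F (p + t *\<^sub>R u + t *\<^sub>R v) - F (p + t *\<^sub>R u) - F (p + t *\<^sub>R v) + F p - t\<^sup>2 * D2 v u\<bar>
          \<le> 3 * (e/6) * t\<^sup>2"
      using second_difference_approx[OF U dF dD u v, of "e/6"] e by auto
    obtain T2 where T2: "T2 > 0" "\<forall>t. 0 < t \<and> t < T2 \<longrightarrow>
        \<bar>F (p + t *\<^sub>R v + t *\<^sub>R u) - F (p + t *\<^sub>R v) - F (p + t *\<^sub>R u) + F p - t\<^sup>2 * D2 u v\<bar>
          \<le> 3 * (e/6) * t\<^sup>2"
      using second_difference_approx[OF U dF dD v u, of "e/6"] e by auto
    define t where "t = min T1 T2 / 2"
    have t: "0 < t" "t < T1" "t < T2" using T1 T2 by (auto simp: t_def)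
    have swap: "p + t *\<^sub>R v + t *\<^sub>R u = p + t *\<^sub>R u + t *\<^sub>R v" by (simp add: algebra_simps)
    define X where "X = F (p + t *\<^sub>R u + t *\<^sub>R v) - F (p + t *\<^sub>R u) - F (p + t *\<^sub>R v) + F p"
    have "\<bar>X - t\<^sup>2 * D2 v u\<bar> \<le> 3 * (e/6) * t\<^sup>2"
      using T1 t unfolding X_def by blast
    moreover have "\<bar>X - t\<^sup>2 * D2 u v\<bar> \<le> 3 * (e/6) * t\<^sup>2"
      using T2 t unfolding X_def swap by (simp add: algebra_simps)
    ultimately have "\<bar>t\<^sup>2 * D2 v u - t\<^sup>2 * D2 u v\<bar> \<le> 3 * (e/6) * t\<^sup>2 + 3 * (e/6) * t\<^sup>2"
      by linarith
    also have "\<dots> = t\<^sup>2 * e" by simp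
    also have "\<bar>t\<^sup>2 * D2 v u - t\<^sup>2 * D2 u v\<bar> = t\<^sup>2 * \<bar>D2 v u - D2 u v\<bar>"
      by (simp add: abs_mult right_diff_distrib[symmetric])
    finally show ?thesis using t by simp
  qed
  then show ?thesis by (metis abs_le_zero_iff eq_iff_diff_eq_0 field_le_epsilon)
qed

lemma second_derivative_symmetric:
  fixes F :: "'a::real_normed_vector \<Rightarrow> real" and D :: "'a \<Rightarrow> 'a \<Rightarrow>\<^sub>L real"
    and D2 :: "'a \<Rightarrow>\<^sub>L 'a \<Rightarrow>\<^sub>L real"
  assumes U: "open U" "p \<in> U" and dF: "\<forall>q\<in>U. (F has_derivative blinfun_apply (D q)) (at q)"
    and dD: "(D has_derivative blinfun_apply D2) (at p)"
  shows "D2 v u = D2 u v"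
proof -
  define cu cv where "cu = norm u + 1" and "cv = norm v + 1"
  have pos: "cu > 0" "cv > 0" by (simp_all add: cu_def cv_def add_nonneg_pos)
  have "norm (u /\<^sub>R cu) \<le> 1" "norm (v /\<^sub>R cv) \<le> 1"
    using pos by (simp_all add: cu_def cv_def field_simps)
  from second_derivative_symmetric_norm_le_1[OF U dF dD this]
  have "D2 v u / (cu * cv) = D2 u v / (cu * cv)"
    by (simp add: blinfun.scaleR_left blinfun.scaleR_right divide_inverse mult_ac)
  then show ?thesis using pos by simp
qed

section \<open>The derivatives of the skewing function at \<open>\<delta> = 0\<close>\<close>

lemma has_derivative_partial_fst:
  fixes G :: "real \<times> real \<Rightarrow> 'b::real_normed_vector"
  assumes "(G has_derivative G') (at (w, d))"
  shows "((\<lambda>t. G (t, d)) has_derivative (\<lambda>h. h *\<^sub>R G' (1, 0))) (at w)"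
proof -
  have "((\<lambda>t. G (t, d)) has_derivative (\<lambda>h. G' (h, 0))) (at w)"
    using has_derivative_compose[OF has_derivative_Pair[OF has_derivative_ident has_derivative_const] assms]
    by (simp add: o_def)
  moreover have "(\<lambda>h. G' (h, 0)) = (\<lambda>h. h *\<^sub>R G' (1, 0))"
  proof
    fix h
    have "G' (h, 0) = G' (h *\<^sub>R (1, 0))" by simp
    also have "\<dots> = h *\<^sub>R G' (1, 0)" by (rule linear_cmul[OF has_derivative_linear[OF assms]])
    finally show "G' (h, 0) = h *\<^sub>R G' (1, 0)" .
  qed
  ultimately show ?thesis by (simp only:)
qed

lemma has_derivative_partial_snd:
  fixes G :: "real \<times> real \<Rightarrow> 'b::real_normed_vector"
  assumes "(G has_derivative G') (at (w, d))"
  shows "((\<lambda>t. G (w, t)) has_derivative (\<lambda>h. h *\<^sub>R G' (0, 1))) (at d)"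
proof -
  have "((\<lambda>t. G (w, t)) has_derivative (\<lambda>h. G' (0, h))) (at d)"
    using has_derivative_compose[OF has_derivative_Pair[OF has_derivative_const has_derivative_ident] assms]
    by (simp add: o_def)
  moreover have "(\<lambda>h. G' (0, h)) = (\<lambda>h. h *\<^sub>R G' (0, 1))"
  proof
    fix h
    have "G' (0, h) = G' (h *\<^sub>R (0, 1))" by simp
    also have "\<dots> = h *\<^sub>R G' (0, 1)" by (rule linear_cmul[OF has_derivative_linear[OF assms]])
    finally show "G' (0, h) = h *\<^sub>R G' (0, 1)" .
  qed
  ultimately show ?thesis by (simp only:)
qed

lemma has_real_derivative_blinfun_apply:
  fixes D :: "real \<Rightarrow> 'a::real_normed_vector \<Rightarrow>\<^sub>L real"
  assumes "(D has_derivative (\<lambda>h. h *\<^sub>R E)) (at x)"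
  shows "((\<lambda>t. D t c) has_real_derivative E c) (at x)"
  using bounded_linear.has_derivative[OF blinfun.bounded_linear_left assms]
  by (rule has_derivative_imp_has_field_derivative) (simp add: blinfun.scaleR_left)

lemma skew_psi_derivatives:
  fixes P :: "real \<Rightarrow> real \<Rightarrow> real" and D :: "real \<times> real \<Rightarrow> (real \<times> real) \<Rightarrow>\<^sub>L real"
  assumes U: "open U" "(w, 0) \<in> U"
    and dF: "\<forall>q\<in>U. ((\<lambda>(w, d). P w d) has_derivative blinfun_apply (D q)) (at q)"
    and dD: "\<forall>q\<in>U. (D has_derivative blinfun_apply (D2 q)) (at q)"
  shows "((\<lambda>d. P w d) has_real_derivative skew_psi P w) (at 0)"
    and "(skew_psi P has_real_derivative skew_dpsi P w) (at w)"
    and "skew_dpsi P w = D2 (w, 0) (0, 1) (1, 0)"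
proof -
  obtain r where r: "r > 0" "ball (w, 0) r \<subseteq> U" using U open_contains_ball by blast
  have in_U_snd: "(w, t) \<in> U" if "t \<in> ball 0 r" for t
    using that r(2) by (auto simp: dist_Pair_Pair)
  have in_U_fst: "(v, 0) \<in> U" if "v \<in> ball w r" for v
    using that r(2) by (auto simp: dist_Pair_Pair)
  have dP_snd: "((\<lambda>t. P v t) has_real_derivative D (v, d) (0, 1)) (at d)" if "(v, d) \<in> U" for v d
    using has_derivative_partial_snd[OF dF[rule_format, OF that]]
    by (simp add: has_field_derivative_def mult_commute_abs)
  have dP_fst: "((\<lambda>t. P t d) has_real_derivative D (v, d) (1, 0)) (at v)" if "(v, d) \<in> U" for v d
    using has_derivative_partial_fst[OF dF[rule_format, OF that]]
    by (simp add: has_field_derivative_def mult_commute_abs)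
  have psi: "skew_psi P v = D (v, 0) (0, 1)" if "(v, 0) \<in> U" for v
    unfolding skew_psi_def using dP_snd[OF that] by (rule DERIV_imp_deriv)
  show "((\<lambda>d. P w d) has_real_derivative skew_psi P w) (at 0)"
    using dP_snd[OF U(2)] psi[OF U(2)] by simp
  have "((\<lambda>t. D (w, t) (1, 0)) has_real_derivative D2 (w, 0) (0, 1) (1, 0)) (at 0)"
    by (intro has_real_derivative_blinfun_apply has_derivative_partial_snd dD[rule_format, OF U(2)])
  then have "((\<lambda>t. deriv (\<lambda>v. P v t) w) has_real_derivative D2 (w, 0) (0, 1) (1, 0)) (at 0)"
  proof (rule has_field_derivative_transform_within_open[of _ _ _ "ball 0 r"])
    fix t :: real assume "t \<in> ball 0 r"
    then show "D (w, t) (1, 0) = deriv (\<lambda>v. P v t) w"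
      using DERIV_imp_deriv[OF dP_fst[OF in_U_snd]] by simp
  qed (use r in auto)
  then show dpsi: "skew_dpsi P w = D2 (w, 0) (0, 1) (1, 0)"
    unfolding skew_dpsi_def by (rule DERIV_imp_deriv)
  have "((\<lambda>v. D (v, 0) (0, 1)) has_real_derivative D2 (w, 0) (1, 0) (0, 1)) (at w)"
    by (intro has_real_derivative_blinfun_apply has_derivative_partial_fst dD[rule_format, OF U(2)])
  then have "(skew_psi P has_real_derivative D2 (w, 0) (1, 0) (0, 1)) (at w)"
  proof (rule has_field_derivative_transform_within_open[of _ _ _ "ball w r"])
    fix v assume "v \<in> ball w r"
    then show "D (v, 0) (0, 1) = skew_psi P v" using psi[OF in_U_fst] by simp
  qed (use r in auto)
  moreover have "D2 (w, 0) (1, 0) (0, 1) = D2 (w, 0) (0, 1) (1, 0)"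
    by (rule second_derivative_symmetric[OF U dF dD[rule_format, OF U(2)]])
  ultimately show "(skew_psi P has_real_derivative skew_dpsi P w) (at w)"
    by (simp add: dpsi)
qed

lemma C2_at_skew_psi:
  fixes P :: "real \<Rightarrow> real \<Rightarrow> real"
  assumes "C2_at (\<lambda>(w, d). P w d) (z, 0)"
  shows "((\<lambda>d. P z d) has_real_derivative skew_psi P z) (at 0)"
    and "(skew_psi P has_real_derivative skew_dpsi P z) (at z)"
    and "isCont (skew_dpsi P) z"
proof -
  obtain U D D2 where U: "open U" "(z, 0) \<in> U"
    and dF: "\<forall>q\<in>U. ((\<lambda>(w, d). P w d) has_derivative blinfun_apply (D q)) (at q)"
    and dD: "\<forall>q\<in>U. (D has_derivative blinfun_apply (D2 q)) (at q)"
    and cD2: "continuous (at (z, 0)) D2"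
    using assms unfolding C2_at_def by blast
  show "((\<lambda>d. P z d) has_real_derivative skew_psi P z) (at 0)"
    and "(skew_psi P has_real_derivative skew_dpsi P z) (at z)"
    using skew_psi_derivatives[OF U dF dD] by blast+
  have "open {w. (w, 0) \<in> U}"
    using continuous_open_vimage[OF U(1), of "\<lambda>w. (w, 0)"] by (simp add: vimage_def)
  then have ev: "\<forall>\<^sub>F w in nhds z. skew_dpsi P w = D2 (w, 0) (0, 1) (1, 0)"
    unfolding eventually_nhds
    using U(2) skew_psi_derivatives(3)[OF U(1) _ dF dD] by (intro exI[of _ "{w. (w, 0) \<in> U}"]) simp
  have "isCont (\<lambda>w. D2 (w, 0) (0, 1) (1, 0)) z"
    using continuous_at_compose[of z "\<lambda>w. (w, 0)" D2, OF _ cD2]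
    by (intro continuous_intros) (simp_all add: o_def)
  then show "isCont (skew_dpsi P) z"
    using isCont_cong[OF ev] by simp
qed

lemma skew_psi_odd:
  assumes "skewing_function P" and "(\<lambda>d. P z d) differentiable (at 0)"
  shows "skew_psi P (- z) = - skew_psi P z"
proof -
  have "(\<lambda>d. P (- z) d) = (\<lambda>d. 1 - P z d)"
    using assms(1) unfolding skewing_function_def by (auto simp: algebra_simps)
  moreover have "((\<lambda>d. 1 - P z d) has_real_derivative 0 - skew_psi P z) (at 0)"
    using assms(2) unfolding skew_psi_def
    by (intro DERIV_diff DERIV_const) (simp add: DERIV_deriv_iff_real_differentiable)
  ultimately show ?thesis
    unfolding skew_psi_def[of P "- z"] by (simp add: DERIV_imp_deriv)
qed

lemma has_real_derivative_odd_imp_even: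
  fixes g g' :: "real \<Rightarrow> real"
  assumes odd: "\<And>z. g (- z) = - g z" and dg: "\<And>z. (g has_real_derivative g' z) (at z)"
  shows "g' (- z) = g' z"
proof -
  have "((\<lambda>x. g (- x)) has_real_derivative - g' (- z)) (at z)"
    using DERIV_mirror dg by blast
  moreover have "((\<lambda>x. g (- x)) has_real_derivative - g' z) (at z)"
    unfolding odd by (intro DERIV_minus dg)
  ultimately show ?thesis using DERIV_unique by fastforce
qed

lemma skewing_function_C2_psi:
  assumes "skewing_function P" and "\<forall>z. C2_at (\<lambda>(w, d). P w d) (z, 0)"
  shows "\<And>z. (skew_psi P has_real_derivative skew_dpsi P z) (at z)"
    and "\<And>z. isCont (skew_dpsi P) z"
    and "\<And>z. skew_psi P (- z) = - skew_psi P z"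
    and "\<And>z. skew_dpsi P (- z) = skew_dpsi P z"
proof -
  show dpsi: "(skew_psi P has_real_derivative skew_dpsi P z) (at z)" for z
    using C2_at_skew_psi(2) assms(2) by blast
  show "isCont (skew_dpsi P) z" for z
    using C2_at_skew_psi(3) assms(2) by blast
  show odd: "skew_psi P (- z) = - skew_psi P z" for z
    using skew_psi_odd[OF assms(1)] C2_at_skew_psi(1) assms(2) real_differentiable_def by blast
  show "skew_dpsi P (- z) = skew_dpsi P z" for z
    using has_real_derivative_odd_imp_even[OF odd dpsi] .
qed

section \<open>Lebesgue integrals and singular Gram matrices\<close>

lemma not_integrable_lborel_const:
  assumes "c \<noteq> (0::real)"
  shows "\<not> integrable lborel (\<lambda>_::real. c)"
proof
  assume "integrable lborel (\<lambda>_::real. c)"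
  then have "(\<integral>\<^sup>+x. ennreal (norm c) \<partial>(lborel::real measure)) < \<infinity>"
    unfolding integrable_iff_bounded by blast
  moreover have "(\<integral>\<^sup>+x. ennreal (norm c) \<partial>(lborel::real measure)) = \<infinity>"
    using assms by (simp add: ennreal_mult_top)
  ultimately show False by simp
qed

lemma continuous_AE_lborel_eq_0:
  fixes g :: "real \<Rightarrow> real"
  assumes g: "continuous_on UNIV g" and ae: "AE x in lborel. g x = 0"
  shows "g x = 0"
proof (rule ccontr)
  assume "g x \<noteq> 0"
  moreover have "open {y. g y \<noteq> 0}"
    using g by (intro open_Collect_neq) (auto intro: continuous_intros)
  ultimately obtain r where r: "r > 0" "ball x r \<subseteq> {y. g y \<noteq> 0}"
    using open_contains_ball by blast
  have meas: "{y. g y \<noteq> 0} \<in> sets lborel"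
    using borel_measurable_continuous_onI[OF g] by measurable
  have "emeasure lborel {y. g y \<noteq> 0} = 0"
    using AE_iff_measurable[OF meas] ae by auto
  moreover have "{x - r/2 .. x + r/2} \<subseteq> {y. g y \<noteq> 0}"
    using r by (intro subset_trans[OF _ r(2)]) (auto simp: dist_real_def)
  then have "emeasure lborel {x - r/2 .. x + r/2} \<le> emeasure lborel {y. g y \<noteq> 0}"
    by (intro emeasure_mono meas)
  ultimately show False using r by simp
qed

lemma integrable_mult_weighted_square_integrable:
  fixes g h w :: "'a \<Rightarrow> real"
  assumes "g \<in> borel_measurable M" "h \<in> borel_measurable M" "w \<in> borel_measurable M"
    and w: "\<And>x. w x \<ge> 0"
    and "integrable M (\<lambda>x. (g x)\<^sup>2 * w x)" "integrable M (\<lambda>x. (h x)\<^sup>2 * w x)"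
  shows "integrable M (\<lambda>x. g x * h x * w x)"
proof (rule Bochner_Integration.integrable_bound)
  show "integrable M (\<lambda>x. (g x)\<^sup>2 * w x + (h x)\<^sup>2 * w x)" using assms by simp
  show "(\<lambda>x. g x * h x * w x) \<in> borel_measurable M" using assms by measurable
  have "norm (g x * h x * w x) \<le> norm ((g x)\<^sup>2 * w x + (h x)\<^sup>2 * w x)" for x
  proof -
    have "2 * \<bar>g x\<bar> * \<bar>h x\<bar> \<le> (g x)\<^sup>2 + (h x)\<^sup>2"
      using sum_squares_bound[of "\<bar>g x\<bar>" "\<bar>h x\<bar>"] by simp
    moreover have "0 \<le> \<bar>g x\<bar> * \<bar>h x\<bar>" by simp
    ultimately have "\<bar>g x * h x\<bar> \<le> (g x)\<^sup>2 + (h x)\<^sup>2"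
      unfolding abs_mult by linarith
    then show ?thesis using w[of x] by (simp add: abs_mult distrib_right[symmetric] mult_right_mono)
  qed
  then show "AE x in M. norm (g x * h x * w x) \<le> norm ((g x)\<^sup>2 * w x + (h x)\<^sup>2 * w x)"
    by simp
qed

lemma integral_gram_quadratic_form:
  fixes s :: "'n::finite \<Rightarrow> 'a \<Rightarrow> real" and v :: "real^'n"
  assumes int: "\<And>i j. integrable M (\<lambda>x. s i x * s j x * w x)"
  shows "integrable M (\<lambda>x. (\<Sum>i\<in>UNIV. v$i * s i x)\<^sup>2 * w x)"
    and "(LINT x|M. (\<Sum>i\<in>UNIV. v$i * s i x)\<^sup>2 * w x)
           = (\<Sum>i\<in>UNIV. \<Sum>j\<in>UNIV. v$i * v$j * (LINT x|M. s i x * s j x * w x))"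
proof -
  have sq: "(\<lambda>x. (\<Sum>i\<in>UNIV. v$i * s i x)\<^sup>2 * w x)
              = (\<lambda>x. \<Sum>i\<in>UNIV. \<Sum>j\<in>UNIV. v$i * v$j * (s i x * s j x * w x))"
  proof
    fix x
    have "(\<Sum>i\<in>UNIV. v$i * s i x)\<^sup>2 * w x = (\<Sum>i\<in>UNIV. \<Sum>j\<in>UNIV. v$i * s i x * (v$j * s j x)) * w x"
      unfolding power2_eq_square sum_product ..
    also have "\<dots> = (\<Sum>i\<in>UNIV. \<Sum>j\<in>UNIV. v$i * v$j * (s i x * s j x * w x))"
      by (simp add: sum_distrib_right sum_distrib_left mult_ac)
    finally show "(\<Sum>i\<in>UNIV. v$i * s i x)\<^sup>2 * w x = (\<Sum>i\<in>UNIV. \<Sum>j\<in>UNIV. v$i * v$j * (s i x * s j x * w x))" .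
  qed
  show "integrable M (\<lambda>x. (\<Sum>i\<in>UNIV. v$i * s i x)\<^sup>2 * w x)"
    unfolding sq using int by simp
  show "(LINT x|M. (\<Sum>i\<in>UNIV. v$i * s i x)\<^sup>2 * w x)
          = (\<Sum>i\<in>UNIV. \<Sum>j\<in>UNIV. v$i * v$j * (LINT x|M. s i x * s j x * w x))"
    unfolding sq using int by (simp add: Bochner_Integration.integral_sum)
qed

lemma singular_gram_matrix_AE_kernel:
  fixes s :: "'n::finite \<Rightarrow> 'a \<Rightarrow> real" and w :: "'a \<Rightarrow> real"
  assumes w: "\<And>x. w x > 0"
    and int: "\<And>i j. integrable M (\<lambda>x. s i x * s j x * w x)"
    and det: "det (\<chi> i j. LINT x|M. s i x * s j x * w x) = 0"
  shows "\<exists>v. v \<noteq> 0 \<and> (AE x in M. (\<Sum>i\<in>UNIV. v$i * s i x) = 0)"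
proof -
  define G where "G = (\<chi> i j. LINT x|M. s i x * s j x * w x)"
  have "\<not> (\<exists>B. B ** G = mat 1)"
    using det invertible_det_nz invertible_left_inverse unfolding G_def by blast
  then obtain v where Gv: "G *v v = 0" and v: "v \<noteq> 0"
    using matrix_left_invertible_ker by blast
  have "(LINT x|M. (\<Sum>i\<in>UNIV. v$i * s i x)\<^sup>2 * w x) = v \<bullet> (G *v v)"
    unfolding integral_gram_quadratic_form(2)[OF int] G_def
    by (simp add: inner_vec_def matrix_vector_mult_def sum_distrib_left mult_ac)
  also have "\<dots> = 0" using Gv by simp
  finally have "AE x in M. (\<Sum>i\<in>UNIV. v$i * s i x)\<^sup>2 * w x = 0"
    using integral_nonneg_eq_0_iff_AE[OF integral_gram_quadratic_form(1)[OF int, of v]] w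
    by (simp add: less_imp_le)
  then have "AE x in M. (\<Sum>i\<in>UNIV. v$i * s i x) = 0"
    by eventually_elim (use w in \<open>simp add: less_imp_neq[symmetric]\<close>)
  with v show ?thesis by blast
qed

section \<open>The Riccati equation and the normal density\<close>

lemma riccati_solution_linear:
  fixes \<psi> \<psi>' \<Psi> :: "real \<Rightarrow> real" and a \<beta> :: real
  assumes d\<psi>: "\<And>z. (\<psi> has_real_derivative \<psi>' z) (at z)"
    and d\<Psi>: "\<And>z. (\<Psi> has_real_derivative \<psi> z) (at z)"
    and \<psi>0: "\<psi> 0 = 0" and a: "a \<noteq> 0"
    and riccati: "\<And>z. \<psi>' z / a - (\<psi> z)\<^sup>2 = \<beta> * (a * z * \<psi> z - 1)"
  shows "\<psi> z = - (a * \<beta>) * z"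
proof -
  \<comment> \<open>\<open>w' = a \<psi> w\<close>, so \<open>w \<cdot> exp (- a \<Psi>)\<close> is constant; it vanishes at \<open>0\<close>.\<close>
  define w where "w z = a * \<psi> z + a\<^sup>2 * \<beta> * z" for z
  define H where "H z = w z * exp (- a * \<Psi> z)" for z
  have "(H has_real_derivative 0) (at x)" for x
  proof -
    have "(H has_real_derivative
            (a * \<psi>' x + a\<^sup>2 * \<beta> * 1) * exp (- a * \<Psi> x) + exp (- a * \<Psi> x) * (- a * \<psi> x) * w x)
            (at x)"
      unfolding H_def w_def
      by (intro DERIV_mult DERIV_add DERIV_cmult DERIV_fun_exp d\<psi> d\<Psi> DERIV_ident)
    moreover have "\<psi>' x = a * ((\<psi> x)\<^sup>2 + \<beta> * (a * x * \<psi> x - 1))"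
      using riccati[of x] a by (simp add: field_simps)
    ultimately show ?thesis
      unfolding w_def by (simp add: algebra_simps power2_eq_square)
  qed
  then have "H z = H 0" using DERIV_isconst_all by blast
  then have "w z = 0" unfolding H_def w_def by (simp add: \<psi>0)
  then have "a * (\<psi> z + a * \<beta> * z) = 0" unfolding w_def by (simp add: power2_eq_square distrib_left mult_ac)
  then have "\<psi> z + a * \<beta> * z = 0" using a by simp
  then show ?thesis by (simp add: algebra_simps)
qed

lemma primitive_of_linear:
  fixes \<Psi> :: "real \<Rightarrow> real"
  assumes "\<And>z. (\<Psi> has_real_derivative c * z) (at z)"
  shows "\<Psi> z = \<Psi> 0 + c * z\<^sup>2 / 2"
proof -
  have "((\<lambda>z. \<Psi> z - c / 2 * z\<^sup>2) has_real_derivative c * x - c / 2 * (2 * x)) (at x)" for x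
    by (intro DERIV_diff DERIV_cmult assms) (auto intro!: derivative_eq_intros)
  then have "\<Psi> z - c / 2 * z\<^sup>2 = \<Psi> 0 - c / 2 * 0\<^sup>2"
    by (intro DERIV_isconst_all[of "\<lambda>z. \<Psi> z - c / 2 * z\<^sup>2"]) simp
  then show ?thesis by simp
qed

lemma gaussian_unit_moments_eq_std_normal:
  fixes f :: "real \<Rightarrow> real"
  assumes f: "\<And>z. f z = K * exp (\<gamma> * z\<^sup>2 / 2)" and K: "K > 0"
    and int: "integrable lborel f" and mass: "(LINT z|lborel. f z) = 1"
    and var: "(LINT z|lborel. z\<^sup>2 * f z) = 1"
  shows "f z = std_normal_density z"
proof -
  have \<gamma>: "\<gamma> < 0"
  proof (rule ccontr)
    assume "\<not> \<gamma> < 0"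
    then have "norm K \<le> norm (f x)" for x using f K by (simp add: zero_le_mult_iff)
    then have "integrable lborel (\<lambda>_::real. K)"
      by (intro Bochner_Integration.integrable_bound[OF int]) (auto intro!: AE_I2)
    then show False using not_integrable_lborel_const[of K] K by simp
  qed
  define s where "s = sqrt (- 1 / \<gamma>)"
  have s: "s > 0" "\<gamma> = - 1 / s\<^sup>2" using \<gamma> by (auto simp: s_def field_simps)
  define C where "C = K * sqrt (2 * pi * s\<^sup>2)"
  have fN: "f z = C * normal_density 0 s z" for z
    unfolding f normal_density_def C_def s(2) using s by (simp add: field_simps)
  have "C = 1" using mass s(1) unfolding fN by simp
  have "(LINT z|lborel. z\<^sup>2 * f z) = C * (LINT z|lborel. normal_density 0 s z * (z - 0) ^ (2 * 1))"
    unfolding fN by (simp add: mult_ac)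
  also have "(LINT z|lborel. normal_density 0 s z * (z - 0) ^ (2 * 1)) = s\<^sup>2"
    by (subst integral_normal_moment_even[OF s(1)]) (simp add: power2_eq_square)
  finally have "s = 1" using var \<open>C = 1\<close> s(1) by (simp add: power2_eq_1_iff)
  then show ?thesis using fN \<open>C = 1\<close> by simp
qed

section \<open>Scores of the reparametrised family\<close>

lemma exp_param_set_nonzero:
  assumes "a \<in> exp_param_set \<Psi>"
  shows "a \<noteq> 0"
  using assms not_integrable_lborel_const[of 1] unfolding exp_param_set_def by auto

lemma A2plus_skew_psi_nonzero:
  assumes "assumption_A2plus f P \<Psi> a"
  shows "\<exists>z. skew_psi P z \<noteq> 0"
proof (rule ccontr)
  assume "\<not> (\<exists>z. skew_psi P z \<noteq> 0)"
  moreover have "\<And>z. (\<Psi> has_real_derivative skew_psi P z) (at z)"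
    using assms unfolding assumption_A2plus_def assumption_A2_def by blast
  ultimately have "(\<lambda>z. exp (- a * \<Psi> z)) = (\<lambda>_. exp (- a * \<Psi> 0))"
    using DERIV_isconst_all[of \<Psi>] by fastforce
  moreover have "integrable lborel (\<lambda>z. exp (- a * \<Psi> z))"
    using assms unfolding assumption_A2plus_def exp_param_set_def by blast
  ultimately show False
    using not_integrable_lborel_const[of "exp (- a * \<Psi> 0)"] by simp
qed

lemma double_scores_standard:
  "double_scores P a 0 1 1 = (\<lambda>x. a * skew_psi P x)"
  "double_scores P a 0 1 2 = (\<lambda>x. a * x * skew_psi P x - 1)"
  "double_scores P a 0 1 3 = (\<lambda>x. 2 * (skew_dpsi P x / a - (skew_psi P x)\<^sup>2))"
  by (simp_all add: double_scores_def fun_eq_iff)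

lemma double_fisher_info_standard:
  assumes "skewing_function P"
  shows "double_fisher_info f P a 0 1
           = (\<chi> i j. LINT x|lborel. double_scores P a 0 1 i x * double_scores P a 0 1 j x * f x)"
proof -
  have half: "P x 0 = 1 / 2" for x using assms unfolding skewing_function_def by blast
  show ?thesis unfolding double_fisher_info_def skew_sym_density_def by (simp add: half)
qed

lemma continuous_on_double_scores:
  assumes "continuous_on UNIV (skew_psi P)" and "continuous_on UNIV (skew_dpsi P)"
  shows "continuous_on UNIV (double_scores P a 0 1 i)"
proof -
  have "i = 1 \<or> i = 2 \<or> i = 3" by (rule exhaust_3)
  then show ?thesis
    using assms by (elim disjE) (auto simp: double_scores_standard divide_inverse intro!: continuous_intros)
qed

lemma double_scores_square_integrable:
  assumes A: "assumption_A2plus f P \<Psi> a"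
    and f: "f \<in> borel_measurable lborel" "\<And>x. f x \<ge> 0" "integrable lborel f"
    and \<psi>: "continuous_on UNIV (skew_psi P)"
  shows "integrable lborel (\<lambda>x. (double_scores P a 0 1 i x)\<^sup>2 * f x)"
proof -
  have \<psi>2: "integrable lborel (\<lambda>x. (skew_psi P x)\<^sup>2 * f x)"
    and z\<psi>2: "integrable lborel (\<lambda>x. (skew_psi P x)\<^sup>2 * x\<^sup>2 * f x)"
    and d\<psi>2: "integrable lborel (\<lambda>x. (2 / a * skew_dpsi P x - 2 * (skew_psi P x)\<^sup>2)\<^sup>2 * f x)"
    using A unfolding assumption_A2plus_def assumption_A2_def by blast+
  have z\<psi>: "integrable lborel (\<lambda>x. x * skew_psi P x * 1 * f x)"
    using f z\<psi>2 borel_measurable_continuous_onI[OF \<psi>]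
    by (intro integrable_mult_weighted_square_integrable) (auto simp: power_mult_distrib mult_ac)
  have "i = 1 \<or> i = 2 \<or> i = 3" by (rule exhaust_3)
  moreover have "integrable lborel (\<lambda>x. (double_scores P a 0 1 1 x)\<^sup>2 * f x)"
    using \<psi>2 by (simp add: double_scores_standard power_mult_distrib mult.assoc)
  moreover have "integrable lborel (\<lambda>x. (double_scores P a 0 1 2 x)\<^sup>2 * f x)"
  proof -
    have "(\<lambda>x. (double_scores P a 0 1 2 x)\<^sup>2 * f x)
            = (\<lambda>x. a\<^sup>2 * ((skew_psi P x)\<^sup>2 * x\<^sup>2 * f x) - 2 * a * (x * skew_psi P x * 1 * f x) + f x)"
      by (simp add: double_scores_standard power2_eq_square algebra_simps)
    then show ?thesis using z\<psi>2 z\<psi> f(3) by simp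
  qed
  moreover have "integrable lborel (\<lambda>x. (double_scores P a 0 1 3 x)\<^sup>2 * f x)"
    using d\<psi>2 by (simp add: double_scores_standard algebra_simps)
  ultimately show ?thesis by auto
qed

lemma double_singular_imp_dependent_scores:
  assumes f: "sym_std_density f" and P: "skewing_function P" and A: "assumption_A2plus f P \<Psi> a"
    and ds: "double_singular f P a"
  shows "\<exists>v :: real^3. v \<noteq> 0 \<and> (\<forall>x. (\<Sum>i\<in>UNIV. v$i * double_scores P a 0 1 i x) = 0)"
proof -
  have f_meas: "f \<in> borel_measurable lborel" and f_pos: "\<And>x. f x > 0"
    and f_int: "integrable lborel f"
    using f unfolding sym_std_density_def by blast+
  have C2: "\<forall>z. C2_at (\<lambda>(w, d). P w d) (z, 0)"
    using A unfolding assumption_A2plus_def by blast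
  note \<psi> = skewing_function_C2_psi[OF P C2]
  have \<psi>_cont: "continuous_on UNIV (skew_psi P)" and d\<psi>_cont: "continuous_on UNIV (skew_dpsi P)"
    using \<psi>(1,2) DERIV_isCont by (blast intro: continuous_at_imp_continuous_on)+
  define s where "s = double_scores P a 0 1"
  have s_cont: "continuous_on UNIV (s i)" for i
    unfolding s_def using \<psi>_cont d\<psi>_cont by (rule continuous_on_double_scores)
  have s_meas: "s i \<in> borel_measurable lborel" for i
    unfolding measurable_lborel2 by (rule borel_measurable_continuous_onI[OF s_cont])
  have s_sq: "integrable lborel (\<lambda>x. (s i x)\<^sup>2 * f x)" for i
    unfolding s_def by (rule double_scores_square_integrable[OF A f_meas less_imp_le[OF f_pos] f_int \<psi>_cont])
  have s_int: "integrable lborel (\<lambda>x. s i x * s j x * f x)" for i j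
    by (rule integrable_mult_weighted_square_integrable[OF s_meas s_meas f_meas less_imp_le[OF f_pos] s_sq s_sq])
  have det: "det (\<chi> i j. LINT x|lborel. s i x * s j x * f x) = 0"
    using ds[unfolded double_singular_def, rule_format, of 1 0] double_fisher_info_standard[OF P]
    unfolding s_def by simp
  obtain v :: "real^3" where v: "v \<noteq> 0" and "AE x in lborel. (\<Sum>i\<in>UNIV. v$i * s i x) = 0"
    using singular_gram_matrix_AE_kernel[OF f_pos s_int det] by blast
  then have "(\<Sum>i\<in>UNIV. v$i * s i x) = 0" for x
    using s_cont
    by (intro continuous_AE_lborel_eq_0[where g = "\<lambda>x. \<Sum>i\<in>UNIV. v$i * s i x"])
      (auto intro!: continuous_intros)
  with v show ?thesis unfolding s_def by blast
qed

lemma double_singular_imp_riccati: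
  assumes f: "sym_std_density f" and P: "skewing_function P" and A: "assumption_A2plus f P \<Psi> a"
    and ds: "double_singular f P a"
  shows "\<exists>\<beta>. \<forall>z. skew_dpsi P z / a - (skew_psi P z)\<^sup>2 = \<beta> * (a * z * skew_psi P z - 1)"
proof -
  have a: "a \<noteq> 0" and C2: "\<forall>z. C2_at (\<lambda>(w, d). P w d) (z, 0)"
    using A exp_param_set_nonzero unfolding assumption_A2plus_def by blast+
  note \<psi> = skewing_function_C2_psi[OF P C2]
  obtain v :: "real^3" where v: "v \<noteq> 0"
    and comb: "\<And>x. v$1 * (a * skew_psi P x) + v$2 * (a * x * skew_psi P x - 1)
                 + v$3 * (2 * (skew_dpsi P x / a - (skew_psi P x)\<^sup>2)) = 0"
    using double_singular_imp_dependent_scores[OF f P A ds]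
    unfolding sum_3 double_scores_standard by blast
  \<comment> \<open>The first score is odd in \<open>x\<close>, the other two are even.\<close>
  have "v$1 * (a * skew_psi P x) = 0" for x
  proof -
    have "- v$1 * (a * skew_psi P x) + v$2 * (a * x * skew_psi P x - 1)
            + v$3 * (2 * (skew_dpsi P x / a - (skew_psi P x)\<^sup>2)) = 0"
      using comb[of "- x"] \<psi>(3,4) by simp
    with comb[of x] show ?thesis by linarith
  qed
  then have v1: "v$1 = 0"
    using A2plus_skew_psi_nonzero[OF A] a by auto
  have v3: "v$3 \<noteq> 0"
  proof
    assume "v$3 = 0"
    moreover have "v$2 = 0" using comb[of 0] v1 \<open>v$3 = 0\<close> by simp
    ultimately have "v = 0" using v1 by (metis exhaust_3 vec_eq_iff zero_index)
    with v show False ..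
  qed
  show ?thesis
  proof (intro exI allI)
    fix z
    show "skew_dpsi P z / a - (skew_psi P z)\<^sup>2 = - v$2 / (2 * v$3) * (a * z * skew_psi P z - 1)"
      using comb[of z] v1 v3 by (simp add: field_simps)
  qed
qed

lemma linear_psi_imp_double_singular:
  assumes d\<psi>: "\<And>z. (skew_psi P has_real_derivative skew_dpsi P z) (at z)"
    and lin: "\<And>z. skew_psi P z = c * z" and a: "a \<noteq> 0"
  shows "double_singular f P a"
  unfolding double_singular_def
proof (intro allI impI)
  fix \<mu> \<sigma> :: real assume \<sigma>: "\<sigma> > 0"
  have \<psi>: "skew_psi P = (\<lambda>z. c * z)" using lin by auto
  moreover have "skew_dpsi P z = c" for z
  proof -
    have "(skew_psi P has_real_derivative c) (at z)"
      unfolding \<psi> by (auto intro!: derivative_eq_intros)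
    then show ?thesis using DERIV_unique[OF d\<psi>[of z]] by blast
  qed
  ultimately have "double_scores P a \<mu> \<sigma> 3 x = - 2 * c * \<sigma> / a * double_scores P a \<mu> \<sigma> 2 x" for x
    using a \<sigma> by (simp add: double_scores_def Let_def field_simps power2_eq_square)
  then have "double_fisher_info f P a \<mu> \<sigma> $ 3 $ j = - 2 * c * \<sigma> / a * double_fisher_info f P a \<mu> \<sigma> $ 2 $ j"
    for j
    by (simp add: double_fisher_info_def mult.assoc)
  then show "det (double_fisher_info f P a \<mu> \<sigma>) = 0"
    unfolding det_3 by (simp add: algebra_simps)
qed

lemma g_exp_of_quadratic:
  assumes "\<Psi> z = \<Psi> 0 + c * z\<^sup>2 / 2"
  shows "g_exp \<Psi> a z = g_exp \<Psi> a 0 * exp (- (a * c) * z\<^sup>2 / 2)"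
proof -
  have "exp (- a * \<Psi> z) = exp (- a * \<Psi> 0) * exp (- (a * c) * z\<^sup>2 / 2)"
    unfolding assms exp_add[symmetric] by (simp add: algebra_simps)
  then show ?thesis unfolding g_exp_def by simp
qed

theorem theorem1:
  fixes f :: "real \<Rightarrow> real" and P :: "real \<Rightarrow> real \<Rightarrow> real"
    and \<Psi> :: "real \<Rightarrow> real" and a :: real
  assumes "sym_std_density f"
    and "skewing_function P"
    and "assumption_A2plus f P \<Psi> a"
  shows "double_singular f P a \<longleftrightarrow>
           ((\<forall>z. f z = std_normal_density z) \<and> (\<exists>c. \<forall>z. skew_psi P z = c * z))"
proof -
  have a: "a \<noteq> 0" and f: "f = g_exp \<Psi> a"
    and d\<Psi>: "\<And>z. (\<Psi> has_real_derivative skew_psi P z) (at z)"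
    using assms(3) exp_param_set_nonzero unfolding assumption_A2plus_def assumption_A2_def by blast+
  have d\<psi>: "\<And>z. (skew_psi P has_real_derivative skew_dpsi P z) (at z)"
    and \<psi>_odd: "\<And>z. skew_psi P (- z) = - skew_psi P z"
    using skewing_function_C2_psi assms(2,3) unfolding assumption_A2plus_def by blast+
  show ?thesis
  proof
    assume "double_singular f P a"
    then obtain \<beta> where "\<And>z. skew_dpsi P z / a - (skew_psi P z)\<^sup>2 = \<beta> * (a * z * skew_psi P z - 1)"
      using double_singular_imp_riccati assms by blast
    then have lin: "skew_psi P z = - (a * \<beta>) * z" for z
      using riccati_solution_linear[OF d\<psi> d\<Psi> _ a] \<psi>_odd[of 0] by simp
    have "f z = f 0 * exp (- (a * - (a * \<beta>)) * z\<^sup>2 / 2)" for z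
      unfolding f using d\<Psi> lin by (intro g_exp_of_quadratic primitive_of_linear) simp
    then have "f z = std_normal_density z" for z
      using assms(1) unfolding sym_std_density_def
      by (intro gaussian_unit_moments_eq_std_normal) blast+
    with lin show "(\<forall>z. f z = std_normal_density z) \<and> (\<exists>c. \<forall>z. skew_psi P z = c * z)" by blast
  next
    assume "(\<forall>z. f z = std_normal_density z) \<and> (\<exists>c. \<forall>z. skew_psi P z = c * z)"
    then show "double_singular f P a"
      using linear_psi_imp_double_singular[OF d\<psi> _ a] by blast
  qed
qed

end
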